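(* Let $V_L=V_{L,\omega}$ be the random potential described in the context, where $B$ satisfies $|B(x)|\le C_B\langle x\rangle^{-d-1-\epsilon}$ for some $C_B$ and $\epsilon>0$. Let $\alpha\in[0,1/2)$ and $O=\Lambda_{1/2}$. Then for almost all $\omega$ there exists a constant $C_\omega$ such that for all sufficiently large $L\le L'$ $$\sup_{x\in\Lambda_L}\big|1_{L^{1/2+\alpha}O}(x)\,(V_L(x)-V_{L'}(x))\big|\le C_\omega L^{-\epsilon}.$$
   Context: $\Lambda_L=[-L/2,L/2)^d$, $\langle x\rangle=\sqrt{1+|x|^2}$, $aO=\{ax:x\in O\}$, $1_A$ the indicator function. For $h:\mathbb{R}^d\to\mathbb{C}$, $h_{\#,L}$ is the $L$-periodic extension of $h|_{\Lambda_L}$ (i.e. $h_{\#,L}(y)=h(x)$ for the unique $x\in\Lambda_L$ with $x-y\in(L\mathbb{Z})^d$). The potential is $V_{L,\omega}(x)=\int_{\Lambda_L}B_{\#,L}(x-y)\,d\mu_\omega(y)$, with $\mu_\omega=\sum_{\gamma\ge1}v_\gamma(\omega)\delta_{y_\gamma(\omega)}$, where $\{y_\gamma\}$ is a Poisson point process on $\mathbb{R}^d$ of unit homogeneous density and the $v_\gamma$ are i.i.d. real random weights independent of the points with $\mathbf{E}v_\gamma^k<\infty$ for $k=1,\dots,d+1$; $B:\mathbb{R}^d\to\mathbb{R}$ is measurable. *)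

theory Defs
  imports "HOL-Probability.Probability"
begin

definition cube :: "real \<Rightarrow> (real^'d) set" where
  "cube L = {x. \<forall>i. - L / 2 \<le> x $ i \<and> x $ i < L / 2}"

definition jbr :: "real^'d \<Rightarrow> real" where
  "jbr x = sqrt (1 + (norm x)\<^sup>2)"

text \<open>L-periodic extension of h restricted to Lambda_L.\<close>
definition per_ext :: "real \<Rightarrow> (real^'d \<Rightarrow> 'b) \<Rightarrow> real^'d \<Rightarrow> 'b" where
  "per_ext L h y = h (THE x. x \<in> cube L \<and> (\<forall>i. \<exists>k::int. x $ i - y $ i = L * of_int k))"

text \<open>V_{L,omega}(x) = integral over Lambda_L of B_{#,L}(x-y) d mu_omega(y),
  mu_omega = sum_gamma v_gamma(omega) delta_{y_gamma(omega)}.\<close>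
definition potential ::
  "real \<Rightarrow> (nat \<Rightarrow> 'w \<Rightarrow> real^'d) \<Rightarrow> (nat \<Rightarrow> 'w \<Rightarrow> real) \<Rightarrow> (real^'d \<Rightarrow> real)
     \<Rightarrow> 'w \<Rightarrow> real^'d \<Rightarrow> real" where
  "potential L y v B \<omega> x =
     (\<Sum>\<gamma>\<in>{\<gamma>. y \<gamma> \<omega> \<in> cube L}. v \<gamma> \<omega> * per_ext L B (x - y \<gamma> \<omega>))"

definition npts :: "(nat \<Rightarrow> 'w \<Rightarrow> real^'d) \<Rightarrow> (real^'d) set \<Rightarrow> 'w \<Rightarrow> nat" where
  "npts y A \<omega> = card {\<gamma>. y \<gamma> \<omega> \<in> A}"

text \<open>(y_gamma) is a Poisson point process on R^d of unit homogeneous density under M: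
  counts in bounded Borel sets are (a.s. finite and) Poisson with mean the Lebesgue
  measure of the set, and counts in pairwise disjoint bounded Borel sets are independent.\<close>
definition poisson_pp :: "'w measure \<Rightarrow> (nat \<Rightarrow> 'w \<Rightarrow> real^'d) \<Rightarrow> bool" where
  "poisson_pp M y \<longleftrightarrow>
     (\<forall>\<gamma>. y \<gamma> \<in> borel_measurable M) \<and>
     (\<forall>A k. A \<in> sets borel \<and> bounded A \<longrightarrow>
        measure M {\<omega> \<in> space M. finite {\<gamma>. y \<gamma> \<omega> \<in> A} \<and> npts y A \<omega> = k}
          = (measure lborel A) ^ k / fact k * exp (- measure lborel A)) \<and>
     (\<forall>(n::nat) A. (\<forall>i<n. A i \<in> sets borel \<and> bounded (A i)) \<and> disjoint_family_on A {..<n} \<longrightarrow>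
        prob_space.indep_vars M (\<lambda>_. count_space UNIV) (\<lambda>i. npts y (A i)) {..<n})"

end

theory Submission
  imports Defs
begin

(*
  For x in the window L^(1/2 + alpha) O one has |x|_inf <= L/8 once L is large. An atom at y
  contributes the same term B (x - y) to V_L(x) and to V_L'(x) unless y or x - y leaves Lambda_L,
  and then |y|_inf >= 3L/8. For such atoms the decay of B bounds both periodised terms by
  C L^(-epsilon) |y|_inf^(-(d + 1)), so

    |V_L(x) - V_L'(x)| <= C L^(-epsilon) sum_gamma |v_gamma| |y_gamma|_inf^(-(d + 1)).

  The random series on the right is almost surely finite: splitting space into dyadic shells, its
  expectation is at most E|v| sum_k 2^(-(k - 1)(d + 1)) |Lambda_(2^(k+1))| < infinity, by the
  Poisson mean counts and the independence of the weights from the points.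
*)

section \<open>Cubes and the sup norm\<close>

lemma infnorm_attained_cart: "\<exists>i. infnorm (x::real^'n) = \<bar>x $ i\<bar>"
proof -
  have "infnorm x = Max (range (\<lambda>i. \<bar>x $ i\<bar>))"
    unfolding infnorm_cart by (simp add: full_SetCompr_eq cSup_eq_Max)
  moreover have "Max (range (\<lambda>i. \<bar>x $ i\<bar>)) \<in> range (\<lambda>i. \<bar>x $ i\<bar>)"
    by (rule Max_in) auto
  ultimately show ?thesis
    by (metis rangeE)
qed

lemma mem_cube_abs_le: "x \<in> cube L \<Longrightarrow> \<bar>x $ i\<bar> \<le> L / 2"
  unfolding cube_def by (auto simp: abs_le_iff dest: spec[of _ i])

lemma infnorm_ge_if_not_mem_cube: "x \<notin> cube L \<Longrightarrow> L / 2 \<le> infnorm x"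
proof -
  assume "x \<notin> cube L"
  then obtain i where "\<not> (- L / 2 \<le> x $ i \<and> x $ i < L / 2)"
    unfolding cube_def by auto
  then show ?thesis
    using component_le_infnorm_cart[of x i] by linarith
qed

lemma mem_cube_if_infnorm_less: "infnorm x < L / 2 \<Longrightarrow> x \<in> cube L"
proof (unfold cube_def, safe)
  fix i
  assume "infnorm x < L / 2"
  then have "\<bar>x $ i\<bar> < L / 2"
    using component_le_infnorm_cart[of x i] by linarith
  then show "- L / 2 \<le> x $ i" "x $ i < L / 2"
    by linarith+
qed

lemma cube_mono: "L \<le> L' \<Longrightarrow> cube L \<subseteq> cube L'"
  unfolding cube_def by (auto simp: subset_iff) (smt (verit) divide_right_mono)+

lemma cube_sets_borel: "cube L \<in> sets borel"
proof -
  have "cube L = (\<Inter>i. {x. - L / 2 \<le> x $ i} \<inter> {x. x $ i < L / 2})"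
    unfolding cube_def by auto
  also have "\<dots> \<in> sets borel"
    by (intro sets.finite_INT sets.Int borel_closed borel_open closed_Collect_le open_Collect_less
        continuous_intros) auto
  finally show ?thesis .
qed

lemma box_subset_cube: "box (\<chi> i. - L / 2) (\<chi> i. L / 2) \<subseteq> cube L"
  unfolding cube_def by (auto simp: mem_box_cart intro: less_imp_le)

lemma cube_subset_cbox: "cube L \<subseteq> cbox (\<chi> i. - L / 2) (\<chi> i. L / 2)"
  unfolding cube_def by (auto simp: mem_box_cart less_imp_le)

lemma bounded_cube: "bounded (cube L)"
  using bounded_cbox cube_subset_cbox by (rule bounded_subset)

lemma fmeasurable_cube: "cube L \<in> fmeasurable lborel"
  by (rule fmeasurableI2[OF fmeasurable_cbox cube_subset_cbox]) (simp add: cube_sets_borel)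

lemma infnorm_le_of_mem_cube: "x \<in> cube L \<Longrightarrow> infnorm x \<le> L / 2"
  using infnorm_attained_cart[of x] mem_cube_abs_le[of x L] by force

lemma measure_cube: "0 \<le> L \<Longrightarrow> measure lborel (cube L :: (real^'n) set) = L ^ CARD('n)"
proof -
  assume "0 \<le> L"
  define a b where "a = ((\<chi> i. - L / 2) :: real^'n)" and "b = ((\<chi> i. L / 2) :: real^'n)"
  have "measure lborel (cbox a b) = L ^ CARD('n)"
  proof (subst content_cbox_cart)
    show "cbox a b \<noteq> {}"
      using \<open>0 \<le> L\<close> by (auto simp: a_def b_def box_eq_empty inner_axis Basis_vec_def)
  qed (simp add: a_def b_def)
  moreover have "measure lborel (box a b) = measure lborel (cbox a b)"
    by (simp add: measure_def emeasure_lborel_box_eq emeasure_lborel_cbox_eq)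
  moreover have "measure lborel (box a b) \<le> measure lborel (cube L :: (real^'n) set)"
    unfolding a_def b_def
    by (rule measure_mono_fmeasurable[OF box_subset_cube])
       (simp_all add: fmeasurable_cube)
  moreover have "measure lborel (cube L :: (real^'n) set) \<le> measure lborel (cbox a b)"
    unfolding a_def b_def
    by (rule measure_mono_fmeasurable[OF cube_subset_cbox]) (simp_all add: cube_sets_borel)
  ultimately show ?thesis
    by linarith
qed

lemma powr_le_half_if_large:
  fixes L \<alpha> :: real
  assumes "\<alpha> < 1 / 2" "2 powr (1 / (1 / 2 - \<alpha>)) \<le> L"
  shows "L powr (1 / 2 + \<alpha>) \<le> L / 2"
proof -
  let ?b = "1 / 2 - \<alpha>"
  have "0 < ?b"
    using assms(1) by simp
  have "0 < L"
    by (rule less_le_trans[OF _ assms(2)]) simp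
  have "2 = (2 powr (1 / ?b)) powr ?b"
    using \<open>0 < ?b\<close> by (simp add: powr_powr)
  also have "\<dots> \<le> L powr ?b"
    using assms \<open>0 < ?b\<close> by (intro powr_mono2) auto
  finally have "L powr (1 / 2 + \<alpha>) * 2 \<le> L powr (1 / 2 + \<alpha>) * L powr ?b"
    by (intro mult_left_mono) auto
  also have "\<dots> = L"
    using \<open>0 < L\<close> by (simp flip: powr_add)
  finally show ?thesis
    by simp
qed

lemma infnorm_le_of_mem_scaled_cube:
  assumes "\<alpha> < 1 / 2" "2 powr (1 / (1 / 2 - \<alpha>)) \<le> L"
    and "x \<in> (\<lambda>z. L powr (1 / 2 + \<alpha>) *\<^sub>R z) ` cube (1 / 2)"
  shows "infnorm x \<le> L / 8"
proof -
  obtain z where z: "z \<in> cube (1 / 2)" "x = L powr (1 / 2 + \<alpha>) *\<^sub>R z"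
    using assms(3) by blast
  have "0 < L"
    by (rule less_le_trans[OF _ assms(2)]) simp
  from z have "infnorm x = L powr (1 / 2 + \<alpha>) * infnorm z"
    by (simp add: infnorm_mul)
  also have "\<dots> \<le> L / 2 * (1 / 4)"
    using powr_le_half_if_large[OF assms(1,2)] infnorm_le_of_mem_cube[OF z(1)] \<open>0 < L\<close>
    by (intro mult_mono) (auto simp: infnorm_pos_le)
  finally show ?thesis
    by simp
qed

section \<open>Periodic extension\<close>

definition lattice_cong :: "real \<Rightarrow> real^'d \<Rightarrow> real^'d \<Rightarrow> bool" where
  "lattice_cong L x w \<longleftrightarrow> (\<forall>i. \<exists>k::int. x $ i - w $ i = L * of_int k)"

lemma lattice_cong_refl: "lattice_cong L w w"
  unfolding lattice_cong_def by (auto intro: exI[of _ 0])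

lemma lattice_cong_unique_in_cube:
  assumes "0 < L" "x \<in> cube L" "x' \<in> cube L" "lattice_cong L x w" "lattice_cong L x' w"
  shows "x = x'"
proof (rule vec_eq_iff[THEN iffD2], rule allI)
  fix i
  obtain k k' :: int where k: "x $ i - w $ i = L * k" and k': "x' $ i - w $ i = L * k'"
    using assms(4,5) unfolding lattice_cong_def by blast
  have "- L / 2 \<le> x $ i" "x $ i < L / 2" "- L / 2 \<le> x' $ i" "x' $ i < L / 2"
    using assms(2,3) unfolding cube_def by auto
  moreover have "L * of_int (k - k') = x $ i - x' $ i"
    using k k' by (simp add: algebra_simps)
  ultimately have "\<bar>L * of_int (k - k')\<bar> < L * 1"
    by auto
  then have "\<bar>of_int (k - k') :: real\<bar> < 1"
    using \<open>0 < L\<close> by (simp add: abs_mult)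
  then have "k = k'"
    by linarith
  with k k' show "x $ i = x' $ i"
    by simp
qed

lemma lattice_cong_rep_in_cube:
  assumes "0 < L"
  obtains x where "x \<in> cube L" "lattice_cong L x w"
proof
  define k where "k i = \<lfloor>(w $ i + L / 2) / L\<rfloor>" for i
  have "- L / 2 \<le> w $ i - L * of_int (k i) \<and> w $ i - L * of_int (k i) < L / 2" for i
    using floor_divide_lower[of L "w $ i + L / 2"] floor_divide_upper[of L "w $ i + L / 2"] assms
    unfolding k_def by (simp add: algebra_simps)
  then show "(\<chi> i. w $ i - L * of_int (k i)) \<in> cube L"
    unfolding cube_def by simp
  show "lattice_cong L (\<chi> i. w $ i - L * of_int (k i)) w"
    unfolding lattice_cong_def by (auto intro: exI[of _ "- k _"])
qed

lemma per_ext_eq_rep: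
  assumes "0 < L" "z \<in> cube L" "lattice_cong L z w"
  shows "per_ext L h w = h z"
proof -
  have "(THE x. x \<in> cube L \<and> lattice_cong L x w) = z"
    using assms lattice_cong_unique_in_cube[OF \<open>0 < L\<close>] by blast
  then show ?thesis
    unfolding per_ext_def lattice_cong_def by simp
qed

lemma per_ext_cube: "0 < L \<Longrightarrow> w \<in> cube L \<Longrightarrow> per_ext L h w = h w"
  by (rule per_ext_eq_rep[OF _ _ lattice_cong_refl])

section \<open>A pathwise bound on the potential difference\<close>

lemma decay_const_nonneg:
  assumes "\<And>x. \<bar>B x\<bar> \<le> C * jbr x powr (- e)"
  shows "0 \<le> C"
  using assms[of 0] abs_ge_zero[of "B 0"] by (simp add: jbr_def)

lemma abs_component_le_jbr: "\<bar>z $ i\<bar> \<le> jbr z"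
proof -
  have "\<bar>z $ i\<bar> \<le> norm z"
    by (rule component_le_norm_cart)
  also have "\<dots> \<le> jbr z"
    unfolding jbr_def by (rule real_le_rsqrt) simp
  finally show ?thesis .
qed

lemma abs_lattice_shift_ge:
  fixes u v z :: real
  assumes "0 < L" "\<bar>u\<bar> \<le> L / 2" "z - (v - u) = L * of_int k"
  shows "\<bar>u\<bar> - \<bar>v\<bar> \<le> \<bar>z\<bar>"
proof (cases "k = 0")
  case False
  then have "L \<le> \<bar>L * of_int k\<bar>"
    using \<open>0 < L\<close> by (simp add: abs_mult)
  then show ?thesis
    using assms by linarith
qed (use assms in auto)

lemma per_ext_decay:
  assumes decay: "\<And>x. \<bar>B x\<bar> \<le> C * jbr x powr (- e)"
    and "0 \<le> e" "0 < L" "y \<in> cube L" "infnorm x \<le> a" "a < infnorm y"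
  shows "\<bar>per_ext L B (x - y)\<bar> \<le> C * (infnorm y - a) powr (- e)"
proof -
  obtain z where z: "z \<in> cube L" "lattice_cong L z (x - y)"
    using lattice_cong_rep_in_cube[OF \<open>0 < L\<close>] .
  obtain j where j: "infnorm y = \<bar>y $ j\<bar>"
    using infnorm_attained_cart by blast
  obtain k :: int where "z $ j - (x $ j - y $ j) = L * k"
    using z(2) unfolding lattice_cong_def by auto
  then have "infnorm y - a \<le> \<bar>z $ j\<bar>"
    using abs_lattice_shift_ge[OF \<open>0 < L\<close> mem_cube_abs_le[OF \<open>y \<in> cube L\<close>]]
      component_le_infnorm_cart[of x j] assms(5) j
    by fastforce
  also have "\<dots> \<le> jbr z"
    by (rule abs_component_le_jbr)
  finally have "jbr z powr (- e) \<le> (infnorm y - a) powr (- e)"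
    using assms(2,6) by (intro powr_mono2') auto
  then have "C * jbr z powr (- e) \<le> C * (infnorm y - a) powr (- e)"
    using decay_const_nonneg[OF decay] by (rule mult_left_mono)
  then show ?thesis
    using decay[of z] per_ext_eq_rep[OF \<open>0 < L\<close> z, of B] by linarith
qed

(* atoms with infnorm y < 1 never lie in the far region 3 L / 8 \<le> infnorm y once L \<ge> 8 / 3 *)
definition tail_weight :: "real \<Rightarrow> real^'d \<Rightarrow> real" where
  "tail_weight p y = (if 1 \<le> infnorm y then infnorm y powr (- p) else 0)"

lemma tail_weight_nonneg: "0 \<le> tail_weight p y"
  unfolding tail_weight_def by simp

lemma half_powr_le:
  fixes t L p \<epsilon> :: real
  assumes "0 < L" "L / 4 \<le> t" "0 \<le> \<epsilon>"
  shows "(t / 2) powr (- (p + \<epsilon>)) \<le> 2 powr (p + 3 * \<epsilon>) * L powr (- \<epsilon>) * t powr (- p)"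
proof -
  have "t powr (- \<epsilon>) \<le> (L / 4) powr (- \<epsilon>)"
    using assms by (intro powr_mono2') auto
  also have "\<dots> = 2 powr (2 * \<epsilon>) * L powr (- \<epsilon>)"
    using \<open>0 < L\<close> by (simp add: powr_divide powr_minus powr_powr[symmetric] divide_simps)
  finally have "2 powr (p + \<epsilon>) * t powr (- p) * t powr (- \<epsilon>)
      \<le> 2 powr (p + \<epsilon>) * t powr (- p) * (2 powr (2 * \<epsilon>) * L powr (- \<epsilon>))"
    by (intro mult_left_mono) auto
  moreover have "(t / 2) powr (- (p + \<epsilon>)) = 2 powr (p + \<epsilon>) * t powr (- p + - \<epsilon>)"
    using assms by (simp add: powr_divide powr_minus divide_simps powr_add[symmetric])
  moreover have "t powr (- p + - \<epsilon>) = t powr (- p) * t powr (- \<epsilon>)"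
    by (rule powr_add)
  moreover have "2 powr (p + \<epsilon>) * (2 powr (2 * \<epsilon>)) = (2 :: real) powr (p + 3 * \<epsilon>)"
    by (simp add: powr_add[symmetric] add_ac)
  ultimately show ?thesis
    by (simp add: mult_ac)
qed

lemma per_ext_far_le:
  assumes decay: "\<And>x. \<bar>B x\<bar> \<le> C * jbr x powr (- (p + \<epsilon>))"
    and "0 \<le> p" "0 \<le> \<epsilon>" "0 < L" "L \<le> L'" "y \<in> cube L'" "infnorm x \<le> L / 8"
    and far: "3 * L / 8 \<le> infnorm y" "1 \<le> infnorm y"
  shows "\<bar>per_ext L' B (x - y)\<bar> \<le> C * 2 powr (p + 3 * \<epsilon>) * L powr (- \<epsilon>) * tail_weight p y"
proof -
  have C: "0 \<le> C"
    by (rule decay_const_nonneg[OF decay])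
  have "\<bar>per_ext L' B (x - y)\<bar> \<le> C * (infnorm y - L / 8) powr (- (p + \<epsilon>))"
    using assms by (intro per_ext_decay[OF decay]) auto
  also have "\<dots> \<le> C * (infnorm y / 2) powr (- (p + \<epsilon>))"
    using assms C by (intro mult_left_mono powr_mono2') auto
  also have "\<dots> \<le> C * (2 powr (p + 3 * \<epsilon>) * L powr (- \<epsilon>) * infnorm y powr (- p))"
    using assms C by (intro mult_left_mono half_powr_le) auto
  finally show ?thesis
    using far by (simp add: tail_weight_def mult_ac)
qed

lemma periodized_term_diff_le:
  assumes decay: "\<And>x. \<bar>B x\<bar> \<le> C * jbr x powr (- (p + \<epsilon>))"
    and "0 \<le> p" "0 \<le> \<epsilon>" "8 / 3 \<le> L" "L \<le> L'" "y \<in> cube L'" "infnorm x \<le> L / 8"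
  shows "\<bar>(if y \<in> cube L then per_ext L B (x - y) else 0) - per_ext L' B (x - y)\<bar>
    \<le> 2 * (C * 2 powr (p + 3 * \<epsilon>) * L powr (- \<epsilon>) * tail_weight p y)"
  (is "_ \<le> 2 * ?K")
proof (cases "y \<in> cube L \<and> x - y \<in> cube L")
  case True
  then have "x - y \<in> cube L'"
    using cube_mono[OF \<open>L \<le> L'\<close>] by blast
  then show ?thesis
    using True assms decay_const_nonneg[OF decay]
    by (simp add: per_ext_cube tail_weight_nonneg)
next
  case False
  have far: "3 * L / 8 \<le> infnorm y"
  proof (cases "y \<in> cube L")
    case True
    with False have "L / 2 \<le> infnorm (x - y)"
      by (blast intro: infnorm_ge_if_not_mem_cube)
    moreover have "infnorm (x - y) \<le> infnorm x + infnorm y"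
      using infnorm_triangle[of x "- y"] by (simp add: infnorm_neg)
    ultimately show ?thesis
      using assms by linarith
  qed (use infnorm_ge_if_not_mem_cube[of y L] assms in linarith)
  moreover have "1 \<le> infnorm y"
    using far assms by linarith
  ultimately have far_le: "\<bar>per_ext L'' B (x - y)\<bar> \<le> ?K"
    if "L \<le> L''" "y \<in> cube L''" for L''
    using assms that by (intro per_ext_far_le[OF decay]) auto
  have "\<bar>if y \<in> cube L then per_ext L B (x - y) else 0\<bar> \<le> ?K"
    using far_le[of L] decay_const_nonneg[OF decay] by (simp add: tail_weight_nonneg)
  moreover have "\<bar>per_ext L' B (x - y)\<bar> \<le> ?K"
    using far_le[of L'] assms by simp
  ultimately show ?thesis
    using abs_triangle_ineq4[of "if y \<in> cube L then per_ext L B (x - y) else 0"] by linarith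
qed

lemma potential_diff_le:
  assumes decay: "\<And>x. \<bar>B x\<bar> \<le> C * jbr x powr (- (p + \<epsilon>))"
    and "0 \<le> p" "0 \<le> \<epsilon>" "8 / 3 \<le> L" "L \<le> L'" "infnorm x \<le> L / 8"
    and fin: "finite {\<gamma>. y \<gamma> \<omega> \<in> cube L'}"
    and summ: "summable (\<lambda>\<gamma>. \<bar>v \<gamma> \<omega>\<bar> * tail_weight p (y \<gamma> \<omega>))"
  shows "\<bar>potential L y v B \<omega> x - potential L' y v B \<omega> x\<bar>
    \<le> 2 * C * 2 powr (p + 3 * \<epsilon>) * L powr (- \<epsilon>) * (\<Sum>\<gamma>. \<bar>v \<gamma> \<omega>\<bar> * tail_weight p (y \<gamma> \<omega>))"
proof -
  let ?S = "{\<gamma>. y \<gamma> \<omega> \<in> cube L'}"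
  let ?K = "2 * C * 2 powr (p + 3 * \<epsilon>) * L powr (- \<epsilon>)"
  let ?w = "\<lambda>\<gamma>. \<bar>v \<gamma> \<omega>\<bar> * tail_weight p (y \<gamma> \<omega>)"
  define d where "d \<gamma> = (if y \<gamma> \<omega> \<in> cube L then per_ext L B (x - y \<gamma> \<omega>) else 0)
    - per_ext L' B (x - y \<gamma> \<omega>)" for \<gamma>
  have "potential L y v B \<omega> x
      = (\<Sum>\<gamma>\<in>?S. v \<gamma> \<omega> * (if y \<gamma> \<omega> \<in> cube L then per_ext L B (x - y \<gamma> \<omega>) else 0))"
    unfolding potential_def using fin cube_mono[OF \<open>L \<le> L'\<close>]
    by (intro sum.mono_neutral_cong_left) auto
  then have diff: "potential L y v B \<omega> x - potential L' y v B \<omega> x = (\<Sum>\<gamma>\<in>?S. v \<gamma> \<omega> * d \<gamma>)"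
    unfolding potential_def d_def by (simp add: sum_subtractf right_diff_distrib)
  have "\<bar>v \<gamma> \<omega> * d \<gamma>\<bar> \<le> ?K * ?w \<gamma>" if "\<gamma> \<in> ?S" for \<gamma>
  proof -
    have "\<bar>d \<gamma>\<bar> \<le> 2 * (C * 2 powr (p + 3 * \<epsilon>) * L powr (- \<epsilon>) * tail_weight p (y \<gamma> \<omega>))"
      unfolding d_def using assms that by (intro periodized_term_diff_le[OF decay]) auto
    then have "\<bar>v \<gamma> \<omega>\<bar> * \<bar>d \<gamma>\<bar>
        \<le> \<bar>v \<gamma> \<omega>\<bar> * (2 * (C * 2 powr (p + 3 * \<epsilon>) * L powr (- \<epsilon>) * tail_weight p (y \<gamma> \<omega>)))"
      by (rule mult_left_mono) simp
    then show ?thesis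
      by (simp only: abs_mult) (simp add: mult_ac)
  qed
  then have "\<bar>\<Sum>\<gamma>\<in>?S. v \<gamma> \<omega> * d \<gamma>\<bar> \<le> ?K * (\<Sum>\<gamma>\<in>?S. ?w \<gamma>)"
    unfolding sum_distrib_left by (intro order_trans[OF sum_abs sum_mono])
  also have "\<dots> \<le> ?K * (\<Sum>\<gamma>. ?w \<gamma>)"
    using decay_const_nonneg[OF decay] fin summ
    by (intro mult_left_mono sum_le_suminf) (auto simp: tail_weight_nonneg)
  finally show ?thesis
    unfolding diff .
qed

lemma potential_diff_on_scaled_cube_le:
  assumes decay: "\<And>x. \<bar>B x\<bar> \<le> C_B * jbr x powr (- (p + \<epsilon>))"
    and "0 \<le> p" "0 \<le> \<epsilon>" "\<alpha> < 1 / 2"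
    and "\<forall>L. finite {\<gamma>. y \<gamma> \<omega> \<in> cube L}"
    and summable: "summable (\<lambda>\<gamma>. \<bar>v \<gamma> \<omega>\<bar> * tail_weight p (y \<gamma> \<omega>))"
  shows "\<exists>C L0. \<forall>L L'. L0 \<le> L \<longrightarrow> L \<le> L' \<longrightarrow>
           (\<forall>x \<in> cube L.
              \<bar>indicator ((\<lambda>z. (L powr (1 / 2 + \<alpha>)) *\<^sub>R z) ` cube (1 / 2)) x
                 * (potential L y v B \<omega> x - potential L' y v B \<omega> x)\<bar>
              \<le> C * L powr (- \<epsilon>))"
proof -
  define C where "C = 2 * C_B * 2 powr (p + 3 * \<epsilon>) * (\<Sum>\<gamma>. \<bar>v \<gamma> \<omega>\<bar> * tail_weight p (y \<gamma> \<omega>))"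
  show ?thesis
  proof (rule exI[of _ C], rule exI[of _ "max (8 / 3) (2 powr (1 / (1 / 2 - \<alpha>)))"], intro allI impI ballI)
    fix L L' :: real and x
    assume L: "max (8 / 3) (2 powr (1 / (1 / 2 - \<alpha>))) \<le> L" and "L \<le> L'"
    have "\<bar>potential L y v B \<omega> x - potential L' y v B \<omega> x\<bar> \<le> C * L powr (- \<epsilon>)"
      if "x \<in> (\<lambda>z. L powr (1 / 2 + \<alpha>) *\<^sub>R z) ` cube (1 / 2)"
      using potential_diff_le[OF decay, of L L' x y \<omega> v] infnorm_le_of_mem_scaled_cube[OF assms(4) _ that]
        assms L \<open>L \<le> L'\<close> unfolding C_def by (simp add: mult_ac)
    moreover have "0 \<le> C * L powr (- \<epsilon>)"
      using decay_const_nonneg[OF decay] summable unfolding C_def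
      by (intro mult_nonneg_nonneg suminf_nonneg) (auto simp: tail_weight_nonneg)
    ultimately show "\<bar>indicator ((\<lambda>z. L powr (1 / 2 + \<alpha>) *\<^sub>R z) ` cube (1 / 2)) x
        * (potential L y v B \<omega> x - potential L' y v B \<omega> x)\<bar> \<le> C * L powr (- \<epsilon>)"
      by (simp add: indicator_def)
  qed
qed

section \<open>Poisson point processes\<close>

lemma poisson_sums_one: "(\<lambda>n. lam ^ n / fact n * exp (- lam)) sums (1::real)"
proof -
  have "(\<lambda>n. lam ^ n / fact n) sums exp lam"
    using exp_converges[of lam] by (simp add: divide_inverse mult.commute)
  then have "(\<lambda>n. lam ^ n / fact n * exp (- lam)) sums (exp lam * exp (- lam))"
    by (rule sums_mult2)
  then show ?thesis
    by (simp add: exp_minus)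
qed

lemma poisson_mean_sums: "(\<lambda>n. real n * (lam ^ n / fact n * exp (- lam))) sums (lam::real)"
proof -
  have "(\<lambda>n. lam * (lam ^ n / fact n * exp (- lam))) sums lam"
    using sums_mult[OF poisson_sums_one, of lam] by simp
  moreover have "lam * (lam ^ n / fact n * exp (- lam))
      = real (Suc n) * (lam ^ Suc n / fact (Suc n) * exp (- lam))" for n
    by (simp add: fact_Suc field_simps del: of_nat_Suc)
  ultimately have "(\<lambda>n. real (Suc n) * (lam ^ Suc n / fact (Suc n) * exp (- lam))) sums lam"
    by (simp only:)
  then show ?thesis
    by (subst (asm) sums_Suc_iff) simp
qed

lemma sigma_sets_vimage_comp_subset:
  fixes f :: "'b::topological_space \<Rightarrow> 'c::topological_space"
  assumes "f \<in> borel \<rightarrow>\<^sub>M borel"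
  shows "sigma_sets \<Omega> {(\<lambda>\<omega>. f (X i \<omega>)) -` A \<inter> \<Omega> | A. A \<in> sets borel}
    \<subseteq> sigma_sets \<Omega> {X j -` A \<inter> \<Omega> | j A. A \<in> sets borel}"
proof (intro sigma_sets_subseteq, safe)
  fix A :: "'c set"
  assume "A \<in> sets borel"
  then show "\<exists>j B. (\<lambda>\<omega>. f (X i \<omega>)) -` A \<inter> \<Omega> = X j -` B \<inter> \<Omega> \<and> B \<in> sets borel"
    by (intro exI[of _ i] exI[of _ "f -` A"]) (use measurable_sets[OF assms] in auto)
qed

lemma identically_distributed_abs_integral:
  fixes X X' :: "'a \<Rightarrow> real"
  assumes "X \<in> borel_measurable M" "X' \<in> borel_measurable M"
    and "distr M borel X = distr M borel X'" "integrable M X'"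
  shows "integrable M X" and "(\<integral>\<omega>. \<bar>X \<omega>\<bar> \<partial>M) = (\<integral>\<omega>. \<bar>X' \<omega>\<bar> \<partial>M)"
proof -
  have "integrable (distr M borel X') (\<lambda>x. x)"
    using assms(2,4) by (subst integrable_distr_eq) auto
  then have "integrable (distr M borel X) (\<lambda>x. x)"
    by (simp only: assms(3))
  then show "integrable M X"
    using assms(1) by (subst (asm) integrable_distr_eq) auto
  have "(\<integral>\<omega>. \<bar>X \<omega>\<bar> \<partial>M) = integral\<^sup>L (distr M borel X) abs"
    using assms(1) by (subst integral_distr) auto
  also have "\<dots> = integral\<^sup>L (distr M borel X') abs"
    by (simp only: assms(3))
  also have "\<dots> = (\<integral>\<omega>. \<bar>X' \<omega>\<bar> \<partial>M)"
    using assms(2) by (subst integral_distr) auto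
  finally show "(\<integral>\<omega>. \<bar>X \<omega>\<bar> \<partial>M) = (\<integral>\<omega>. \<bar>X' \<omega>\<bar> \<partial>M)" .
qed

context prob_space
begin

lemma poisson_pp_count_event:
  assumes "poisson_pp M y" "A \<in> sets borel" "bounded A" "0 < measure lborel A"
  shows "prob {\<omega> \<in> space M. finite {\<gamma>. y \<gamma> \<omega> \<in> A} \<and> npts y A \<omega> = n}
      = measure lborel A ^ n / fact n * exp (- measure lborel A)"
    and "{\<omega> \<in> space M. finite {\<gamma>. y \<gamma> \<omega> \<in> A} \<and> npts y A \<omega> = n} \<in> events"
proof -
  show prob: "prob {\<omega> \<in> space M. finite {\<gamma>. y \<gamma> \<omega> \<in> A} \<and> npts y A \<omega> = n}
      = measure lborel A ^ n / fact n * exp (- measure lborel A)"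
    using assms unfolding poisson_pp_def by blast
  (* measure vanishes outside sets M, while Poisson probabilities are positive *)
  show "{\<omega> \<in> space M. finite {\<gamma>. y \<gamma> \<omega> \<in> A} \<and> npts y A \<omega> = n} \<in> events"
    using measure_notin_sets[of _ M] prob assms(4) by fastforce
qed

lemma poisson_pp_AE_finite:
  assumes "poisson_pp M y" "A \<in> sets borel" "bounded A" "0 < measure lborel A"
  shows "AE \<omega> in M. finite {\<gamma>. y \<gamma> \<omega> \<in> A}"
proof -
  define E where "E n = {\<omega> \<in> space M. finite {\<gamma>. y \<gamma> \<omega> \<in> A} \<and> npts y A \<omega> = n}" for n
  have "(\<lambda>n. prob (E n)) sums prob (\<Union>n. E n)"
    using poisson_pp_count_event(2)[OF assms]
    by (intro measure_UNION) (auto simp: E_def disjoint_family_on_def)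
  then have "prob (\<Union>n. E n) = 1"
    using poisson_sums_one poisson_pp_count_event(1)[OF assms] unfolding E_def
    by (simp add: sums_unique2)
  then have "AE \<omega> in M. \<omega> \<in> (\<Union>n. E n)"
    using poisson_pp_count_event(2)[OF assms] by (subst AE_in_set_eq_1) (auto simp: E_def)
  then show ?thesis
    by eventually_elim (auto simp: E_def)
qed

lemma poisson_pp_expected_count:
  assumes "poisson_pp M y" "A \<in> sets borel" "bounded A" "0 < measure lborel A"
  shows "(\<integral>\<^sup>+\<omega>. (\<Sum>\<gamma>. indicator A (y \<gamma> \<omega>)) \<partial>M) = ennreal (measure lborel A)"
proof -
  define E where "E n = {\<omega> \<in> space M. finite {\<gamma>. y \<gamma> \<omega> \<in> A} \<and> npts y A \<omega> = n}" for n
  have E: "E n \<in> events" for n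
    unfolding E_def by (rule poisson_pp_count_event(2)[OF assms])
  have "AE \<omega> in M. (\<Sum>\<gamma>. indicator A (y \<gamma> \<omega>)) = (\<Sum>n. of_nat n * indicator (E n) \<omega> :: ennreal)"
    using poisson_pp_AE_finite[OF assms] AE_space
  proof eventually_elim
    case (elim \<omega>)
    let ?m = "npts y A \<omega>"
    have "(\<Sum>\<gamma>. indicator A (y \<gamma> \<omega>) :: ennreal) = (\<Sum>\<gamma>\<in>{\<gamma>. y \<gamma> \<omega> \<in> A}. 1)"
      using elim by (subst suminf_finite[of "{\<gamma>. y \<gamma> \<omega> \<in> A}"]) auto
    also have "\<dots> = of_nat ?m"
      unfolding npts_def by simp
    also have "\<dots> = (\<Sum>n\<in>{?m}. of_nat n * indicator (E n) \<omega>)"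
      using elim by (simp add: E_def)
    also have "\<dots> = (\<Sum>n. of_nat n * indicator (E n) \<omega>)"
      by (rule suminf_finite[symmetric]) (auto simp: E_def)
    finally show ?case .
  qed
  then have "(\<integral>\<^sup>+\<omega>. (\<Sum>\<gamma>. indicator A (y \<gamma> \<omega>)) \<partial>M)
      = (\<Sum>n. \<integral>\<^sup>+\<omega>. of_nat n * indicator (E n) \<omega> \<partial>M)"
    using E by (simp add: nn_integral_cong_AE nn_integral_suminf)
  also have "\<dots> = (\<Sum>n. ennreal (real n * (measure lborel A ^ n / fact n * exp (- measure lborel A))))"
    using E poisson_pp_count_event(1)[OF assms]
    by (simp add: E_def nn_integral_cmult_indicator emeasure_eq_measure ennreal_of_nat_eq_real_of_nat
        ennreal_mult'[symmetric])
  also have "\<dots> = ennreal (measure lborel A)"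
    using poisson_mean_sums by (subst suminf_ennreal2) (auto simp: sums_iff)
  finally show ?thesis .
qed

lemma indep_var_comp_of_indep_generated:
  fixes f :: "'b::topological_space \<Rightarrow> real" and g :: "'c::topological_space \<Rightarrow> real"
  assumes "indep_set
      (sigma_sets (space M) {X i -` A \<inter> space M | i A. A \<in> sets borel})
      (sigma_sets (space M) {Y i -` A \<inter> space M | i A. A \<in> sets borel})"
    and [measurable]: "X i \<in> borel_measurable M" "Y i \<in> borel_measurable M"
      "f \<in> borel_measurable borel" "g \<in> borel_measurable borel"
  shows "indep_var borel (\<lambda>\<omega>. f (X i \<omega>)) borel (\<lambda>\<omega>. g (Y i \<omega>))"
proof -
  have "indep_set
      (sigma_sets (space M) {(\<lambda>\<omega>. f (X i \<omega>)) -` A \<inter> space M | A. A \<in> sets borel})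
      (sigma_sets (space M) {(\<lambda>\<omega>. g (Y i \<omega>)) -` A \<inter> space M | A. A \<in> sets borel})"
    using assms(1) sigma_sets_vimage_comp_subset[OF assms(4), of "space M" X i]
      sigma_sets_vimage_comp_subset[OF assms(5), of "space M" Y i]
    unfolding indep_sets2_eq by blast
  then show ?thesis
    unfolding indep_var_eq by simp
qed

lemma nn_integral_abs_mult_indicator_indep:
  fixes X :: "'a \<Rightarrow> real"
  assumes "indep_var borel (\<lambda>\<omega>. \<bar>X \<omega>\<bar>) borel (\<lambda>\<omega>. indicator C (Y \<omega>))" "integrable M X"
    and [measurable]: "Y \<in> borel_measurable M" "C \<in> sets borel"
  shows "(\<integral>\<^sup>+\<omega>. ennreal (\<bar>X \<omega>\<bar> * indicator C (Y \<omega>)) \<partial>M)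
    = ennreal (\<integral>\<omega>. \<bar>X \<omega>\<bar> \<partial>M) * (\<integral>\<^sup>+\<omega>. indicator C (Y \<omega>) \<partial>M)"
proof -
  have int: "integrable M (\<lambda>\<omega>. \<bar>X \<omega>\<bar>)" "integrable M (\<lambda>\<omega>. indicator C (Y \<omega>) :: real)"
    using assms(2) by (auto intro: integrable_const_bound[where B = 1])
  have "(\<integral>\<^sup>+\<omega>. ennreal (\<bar>X \<omega>\<bar> * indicator C (Y \<omega>)) \<partial>M)
      = ennreal ((\<integral>\<omega>. \<bar>X \<omega>\<bar> \<partial>M) * (\<integral>\<omega>. indicator C (Y \<omega>) \<partial>M))"
    using indep_var_integrable[OF assms(1) int] indep_var_lebesgue_integral[OF assms(1) int]
    by (subst nn_integral_eq_integral) auto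
  also have "\<dots> = ennreal (\<integral>\<omega>. \<bar>X \<omega>\<bar> \<partial>M) * ennreal (\<integral>\<omega>. indicator C (Y \<omega>) \<partial>M)"
    by (simp add: ennreal_mult)
  also have "ennreal (\<integral>\<omega>. indicator C (Y \<omega>) \<partial>M) = (\<integral>\<^sup>+\<omega>. indicator C (Y \<omega>) \<partial>M)"
    using nn_integral_eq_integral[OF int(2)] by (simp add: ennreal_indicator)
  finally show ?thesis .
qed

lemma poisson_pp_expected_marked_count:
  assumes pp: "poisson_pp M y" and v_measurable [measurable]: "\<And>\<gamma>. v \<gamma> \<in> borel_measurable M"
    and dist: "\<And>\<gamma>. distr M borel (v \<gamma>) = distr M borel (v 0)" and "integrable M (v 0)"
    and ind: "indep_set
      (sigma_sets (space M) {v \<gamma> -` A \<inter> space M | \<gamma> A. A \<in> sets borel})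
      (sigma_sets (space M) {y \<gamma> -` A \<inter> space M | \<gamma> A. A \<in> sets borel})"
    and C: "C \<in> sets borel" "bounded C" "0 < measure lborel C"
  shows "(\<integral>\<^sup>+\<omega>. (\<Sum>\<gamma>. ennreal (\<bar>v \<gamma> \<omega>\<bar> * indicator C (y \<gamma> \<omega>))) \<partial>M)
    = ennreal (\<integral>\<omega>. \<bar>v 0 \<omega>\<bar> \<partial>M) * ennreal (measure lborel C)"
proof -
  have y_measurable [measurable]: "y \<gamma> \<in> borel_measurable M" for \<gamma>
    using pp unfolding poisson_pp_def by blast
  note [measurable] = C(1)
  define a where "a = (\<integral>\<omega>. \<bar>v 0 \<omega>\<bar> \<partial>M)"
  note same_distr =
    identically_distributed_abs_integral[OF v_measurable v_measurable dist \<open>integrable M (v 0)\<close>]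
  have summand: "(\<integral>\<^sup>+\<omega>. ennreal (\<bar>v \<gamma> \<omega>\<bar> * indicator C (y \<gamma> \<omega>)) \<partial>M)
      = ennreal a * (\<integral>\<^sup>+\<omega>. indicator C (y \<gamma> \<omega>) \<partial>M)" for \<gamma>
  proof -
    have "indep_var borel (\<lambda>\<omega>. \<bar>v \<gamma> \<omega>\<bar>) borel (\<lambda>\<omega>. indicator C (y \<gamma> \<omega>))"
      by (rule indep_var_comp_of_indep_generated[OF ind]) measurable
    then show ?thesis
      using nn_integral_abs_mult_indicator_indep[OF _ same_distr(1) y_measurable C(1)]
      by (simp only: same_distr(2)[of \<gamma>] a_def)
  qed
  have "(\<integral>\<^sup>+\<omega>. (\<Sum>\<gamma>. ennreal (\<bar>v \<gamma> \<omega>\<bar> * indicator C (y \<gamma> \<omega>))) \<partial>M)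
      = (\<Sum>\<gamma>. \<integral>\<^sup>+\<omega>. ennreal (\<bar>v \<gamma> \<omega>\<bar> * indicator C (y \<gamma> \<omega>)) \<partial>M)"
    by (rule nn_integral_suminf) measurable
  also have "\<dots> = (\<Sum>\<gamma>. ennreal a * (\<integral>\<^sup>+\<omega>. indicator C (y \<gamma> \<omega>) \<partial>M))"
    by (simp only: summand)
  also have "\<dots> = ennreal a * (\<integral>\<^sup>+\<omega>. (\<Sum>\<gamma>. indicator C (y \<gamma> \<omega>)) \<partial>M)"
    by (subst nn_integral_suminf) simp_all
  also have "\<dots> = ennreal a * ennreal (measure lborel C)"
    using poisson_pp_expected_count[OF pp C] by simp
  finally show ?thesis
    unfolding a_def .
qed

lemma AE_finite_points_in_cubes:
  assumes "poisson_pp M y"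
  shows "AE \<omega> in M. \<forall>L. finite {\<gamma>. y \<gamma> \<omega> \<in> cube L}"
proof -
  have "AE \<omega> in M. \<forall>n::nat. finite {\<gamma>. y \<gamma> \<omega> \<in> cube (2 ^ n)}"
    using assms by (subst AE_all_countable)
      (auto intro!: poisson_pp_AE_finite cube_sets_borel bounded_cube simp: measure_cube)
  then show ?thesis
  proof eventually_elim
    case (elim \<omega>)
    show ?case
    proof
      fix L :: real
      obtain n where "L < 2 ^ n"
        using real_arch_pow[of 2 L] by auto
      then have "{\<gamma>. y \<gamma> \<omega> \<in> cube L} \<subseteq> {\<gamma>. y \<gamma> \<omega> \<in> cube (2 ^ n)}"
        using cube_mono[of L "2 ^ n"] by auto
      then show "finite {\<gamma>. y \<gamma> \<omega> \<in> cube L}"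
        using elim finite_subset by blast
    qed
  qed
qed

end

section \<open>Almost sure summability of the tail weights\<close>

lemma dyadic_interval:
  fixes t :: real
  assumes "1 \<le> t"
  obtains j where "2 ^ j \<le> t" "t < 2 ^ Suc j"
proof -
  define k where "k = (LEAST k. t < (2::real) ^ k)"
  have "t < 2 ^ k"
    unfolding k_def using real_arch_pow[of 2 t] by (auto intro: LeastI_ex)
  moreover have "k \<noteq> 0"
    using \<open>t < 2 ^ k\<close> assms by (intro notI) simp
  then obtain j where "k = Suc j"
    using not0_implies_Suc by blast
  moreover have "2 ^ j \<le> t"
    using not_less_Least[of j "\<lambda>k. t < (2::real) ^ k"] \<open>k = Suc j\<close> unfolding k_def by simp
  ultimately show ?thesis
    using that by simp
qed

(* bounds tail_weight (d + 1) on the shell 2 ^ (k - 1) \<le> infnorm y < 2 ^ k,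
   which lies in cube (2 ^ (k + 1)) *)
definition dyadic_weight :: "nat \<Rightarrow> nat \<Rightarrow> real" where
  "dyadic_weight d k = (2 / 2 ^ k) ^ (d + 1)"

lemma dyadic_weight_nonneg: "0 \<le> dyadic_weight d k"
  unfolding dyadic_weight_def by simp

lemma dyadic_weight_mult_volume: "dyadic_weight d k * (2 ^ (k + 1)) ^ d = 2 ^ (2 * d + 1) * (1 / 2) ^ k"
  unfolding dyadic_weight_def by (simp add: power_divide power_mult_distrib field_simps power_add
      mult_2_right flip: power_mult)

lemma tail_weight_le_dyadic:
  "ennreal (tail_weight (real CARD('d) + 1) (y :: real^'d))
    \<le> (\<Sum>k. ennreal (dyadic_weight CARD('d) k * indicator (cube (2 ^ (k + 1))) y))"
proof (cases "1 \<le> infnorm y")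
  case True
  let ?d = "CARD('d)"
  obtain j where j: "2 ^ j \<le> infnorm y" "infnorm y < 2 ^ Suc j"
    using dyadic_interval[OF True] .
  have "y \<in> cube (2 ^ (Suc j + 1))"
    using j by (intro mem_cube_if_infnorm_less) simp
  have "tail_weight (real ?d + 1) y = inverse (infnorm y powr (real ?d + 1))"
    unfolding tail_weight_def powr_minus using True by simp
  also have "\<dots> = inverse (infnorm y ^ (?d + 1))"
    using True powr_realpow[of "infnorm y" "?d + 1"] by (simp add: add.commute)
  also have "\<dots> \<le> inverse ((2 ^ j) ^ (?d + 1))"
    using j by (intro le_imp_inverse_le power_mono) auto
  also have "\<dots> = dyadic_weight ?d (Suc j) * indicator (cube (2 ^ (Suc j + 1))) y"
    using \<open>y \<in> cube _\<close> by (simp add: dyadic_weight_def power_divide inverse_eq_divide)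
  finally have "ennreal (tail_weight (real ?d + 1) y)
      \<le> (\<Sum>k\<in>{Suc j}. ennreal (dyadic_weight ?d k * indicator (cube (2 ^ (k + 1))) y))"
    by (simp add: ennreal_leI)
  also have "\<dots> \<le> (\<Sum>k. ennreal (dyadic_weight ?d k * indicator (cube (2 ^ (k + 1))) y))"
    by (rule sum_le_suminf) auto
  finally show ?thesis .
qed (simp add: tail_weight_def)

lemma suminf_swap_ennreal:
  fixes f :: "nat \<Rightarrow> nat \<Rightarrow> ennreal"
  shows "(\<Sum>i. \<Sum>j. f i j) = (\<Sum>j. \<Sum>i. f i j)"
proof -
  have "(\<Sum>i. \<Sum>j. f i j) = (\<integral>\<^sup>+i. (\<Sum>j. f i j) \<partial>count_space UNIV)"
    by (rule nn_integral_count_space_nat[symmetric])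
  also have "\<dots> = (\<Sum>j. \<integral>\<^sup>+i. f i j \<partial>count_space UNIV)"
    by (rule nn_integral_suminf) simp
  also have "\<dots> = (\<Sum>j. \<Sum>i. f i j)"
    by (simp add: nn_integral_count_space_nat)
  finally show ?thesis .
qed

definition dyadic_majorant :: "(nat \<Rightarrow> 'w \<Rightarrow> real^'d) \<Rightarrow> (nat \<Rightarrow> 'w \<Rightarrow> real) \<Rightarrow> 'w \<Rightarrow> ennreal" where
  "dyadic_majorant y v \<omega> = (\<Sum>k. ennreal (dyadic_weight CARD('d) k) *
     (\<Sum>\<gamma>. ennreal (\<bar>v \<gamma> \<omega>\<bar> * indicator (cube (2 ^ (k + 1))) (y \<gamma> \<omega>))))"

lemma tail_weight_sum_le_dyadic_majorant:
  fixes y :: "nat \<Rightarrow> 'w \<Rightarrow> real^'d"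
  shows "(\<Sum>\<gamma>. ennreal (\<bar>v \<gamma> \<omega>\<bar> * tail_weight (real CARD('d) + 1) (y \<gamma> \<omega>))) \<le> dyadic_majorant y v \<omega>"
proof -
  let ?w = "dyadic_weight CARD('d)" and ?C = "\<lambda>k. cube (2 ^ (k + 1)) :: (real^'d) set"
  have "(\<Sum>\<gamma>. ennreal (\<bar>v \<gamma> \<omega>\<bar> * tail_weight (real CARD('d) + 1) (y \<gamma> \<omega>)))
      \<le> (\<Sum>\<gamma>. \<Sum>k. ennreal (?w k) * ennreal (\<bar>v \<gamma> \<omega>\<bar> * indicator (?C k) (y \<gamma> \<omega>)))"
  proof (intro suminf_le allI)
    fix \<gamma>
    have "ennreal (\<bar>v \<gamma> \<omega>\<bar> * tail_weight (real CARD('d) + 1) (y \<gamma> \<omega>))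
        \<le> ennreal \<bar>v \<gamma> \<omega>\<bar> * (\<Sum>k. ennreal (?w k * indicator (?C k) (y \<gamma> \<omega>)))"
      using tail_weight_le_dyadic[of "y \<gamma> \<omega>"]
      by (subst ennreal_mult) (auto intro: mult_left_mono simp: tail_weight_nonneg)
    also have "\<dots> = (\<Sum>k. ennreal (?w k) * ennreal (\<bar>v \<gamma> \<omega>\<bar> * indicator (?C k) (y \<gamma> \<omega>)))"
      unfolding ennreal_suminf_cmult[symmetric]
      by (intro suminf_cong) (simp add: ennreal_mult[symmetric] dyadic_weight_nonneg mult.left_commute)
    finally show "ennreal (\<bar>v \<gamma> \<omega>\<bar> * tail_weight (real CARD('d) + 1) (y \<gamma> \<omega>))
        \<le> (\<Sum>k. ennreal (?w k) * ennreal (\<bar>v \<gamma> \<omega>\<bar> * indicator (?C k) (y \<gamma> \<omega>)))" .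
  qed auto
  also have "\<dots> = dyadic_majorant y v \<omega>"
    unfolding dyadic_majorant_def by (subst suminf_swap_ennreal) simp
  finally show ?thesis .
qed

context prob_space
begin

lemma AE_dyadic_majorant_finite:
  fixes y :: "nat \<Rightarrow> 'a \<Rightarrow> real^'d"
  assumes "poisson_pp M y" "\<And>\<gamma>. v \<gamma> \<in> borel_measurable M"
    and "\<And>\<gamma>. distr M borel (v \<gamma>) = distr M borel (v 0)" "integrable M (v 0)"
    and "indep_set
      (sigma_sets (space M) {v \<gamma> -` A \<inter> space M | \<gamma> A. A \<in> sets borel})
      (sigma_sets (space M) {y \<gamma> -` A \<inter> space M | \<gamma> A. A \<in> sets borel})"
  shows "AE \<omega> in M. dyadic_majorant y v \<omega> \<noteq> \<infinity>"
proof -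
  let ?d = "CARD('d)" and ?w = "dyadic_weight CARD('d)"
  let ?C = "\<lambda>k. cube (2 ^ (k + 1)) :: (real^'d) set"
  let ?X = "\<lambda>k \<omega>. \<Sum>\<gamma>. ennreal (\<bar>v \<gamma> \<omega>\<bar> * indicator (?C k) (y \<gamma> \<omega>))"
  define a where "a = (\<integral>\<omega>. \<bar>v 0 \<omega>\<bar> \<partial>M)"
  have [measurable]: "y \<gamma> \<in> borel_measurable M" for \<gamma>
    using assms(1) unfolding poisson_pp_def by blast
  note [measurable] = assms(2) cube_sets_borel
  have "(\<integral>\<^sup>+\<omega>. dyadic_majorant y v \<omega> \<partial>M) = (\<Sum>k. ennreal (?w k) * (\<integral>\<^sup>+\<omega>. ?X k \<omega> \<partial>M))"
    unfolding dyadic_majorant_def by (subst nn_integral_suminf) (simp_all add: nn_integral_cmult)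
  also have "\<dots> = (\<Sum>k. ennreal (a * 2 ^ (2 * ?d + 1) * (1 / 2) ^ k))"
  proof (rule suminf_cong)
    fix k
    have "measure lborel (?C k) = (2 ^ (k + 1)) ^ ?d"
      by (simp add: measure_cube)
    then have "(\<integral>\<^sup>+\<omega>. ?X k \<omega> \<partial>M) = ennreal a * ennreal ((2 ^ (k + 1)) ^ ?d)"
      unfolding a_def using poisson_pp_expected_marked_count[OF assms cube_sets_borel bounded_cube]
      by simp
    then have "ennreal (?w k) * (\<integral>\<^sup>+\<omega>. ?X k \<omega> \<partial>M) = ennreal (a * (?w k * (2 ^ (k + 1)) ^ ?d))"
      by (simp add: ennreal_mult[symmetric] dyadic_weight_def a_def mult_ac)
    then show "ennreal (?w k) * (\<integral>\<^sup>+\<omega>. ?X k \<omega> \<partial>M) = ennreal (a * 2 ^ (2 * ?d + 1) * (1 / 2) ^ k)"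
      by (simp only: dyadic_weight_mult_volume mult.assoc)
  qed
  also have "\<dots> = ennreal (\<Sum>k. a * 2 ^ (2 * ?d + 1) * (1 / 2) ^ k)"
    by (intro suminf_ennreal2 summable_mult summable_geometric) (auto simp: a_def)
  finally have "(\<integral>\<^sup>+\<omega>. dyadic_majorant y v \<omega> \<partial>M) \<noteq> \<infinity>"
    by simp
  moreover have "dyadic_majorant y v \<in> borel_measurable M"
    unfolding dyadic_majorant_def by measurable
  ultimately show ?thesis
    by (intro nn_integral_PInf_AE)
qed

lemma AE_summable_tail_weight:
  fixes y :: "nat \<Rightarrow> 'a \<Rightarrow> real^'d"
  assumes "poisson_pp M y" "\<And>\<gamma>. v \<gamma> \<in> borel_measurable M"
    and "\<And>\<gamma>. distr M borel (v \<gamma>) = distr M borel (v 0)" "integrable M (v 0)"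
    and "indep_set
      (sigma_sets (space M) {v \<gamma> -` A \<inter> space M | \<gamma> A. A \<in> sets borel})
      (sigma_sets (space M) {y \<gamma> -` A \<inter> space M | \<gamma> A. A \<in> sets borel})"
  shows "AE \<omega> in M. summable (\<lambda>\<gamma>. \<bar>v \<gamma> \<omega>\<bar> * tail_weight (real CARD('d) + 1) (y \<gamma> \<omega>))"
  using AE_dyadic_majorant_finite[OF assms]
proof eventually_elim
  case (elim \<omega>)
  then show ?case
    using tail_weight_sum_le_dyadic_majorant[of v \<omega> y]
    by (intro summable_suminf_not_top) (auto simp: tail_weight_nonneg top_unique)
qed

end

theorem lemma5p1:
  fixes M :: "'w measure"
    and y :: "nat \<Rightarrow> 'w \<Rightarrow> real^'d"
    and v :: "nat \<Rightarrow> 'w \<Rightarrow> real"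
    and B :: "real^'d \<Rightarrow> real"
    and C_B \<epsilon> \<alpha> :: real
  assumes "prob_space M"
    and "poisson_pp M y"
    and "prob_space.indep_vars M (\<lambda>_. borel) v UNIV"
    and "\<And>\<gamma>. distr M borel (v \<gamma>) = distr M borel (v 0)"
    and "\<And>k. k \<in> {1..CARD('d) + 1} \<Longrightarrow> integrable M (\<lambda>\<omega>. (v 0 \<omega>) ^ k)"
    and "prob_space.indep_set M
           (sigma_sets (space M) {v \<gamma> -` A \<inter> space M | \<gamma> A. A \<in> sets borel})
           (sigma_sets (space M) {y \<gamma> -` A \<inter> space M | \<gamma> A. A \<in> sets borel})"
    and "B \<in> borel_measurable borel"
    and "\<epsilon> > 0"
    and "\<And>x. \<bar>B x\<bar> \<le> C_B * jbr x powr (- (real CARD('d) + 1 + \<epsilon>))"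
    and "0 \<le> \<alpha>" and "\<alpha> < 1 / 2"
  shows "AE \<omega> in M. \<exists>C. \<exists>L0. \<forall>L L'. L0 \<le> L \<longrightarrow> L \<le> L' \<longrightarrow>
           (\<forall>x \<in> cube L.
              \<bar>indicator ((\<lambda>z. (L powr (1 / 2 + \<alpha>)) *\<^sub>R z) ` cube (1 / 2)) x
                 * (potential L y v B \<omega> x - potential L' y v B \<omega> x)\<bar>
              \<le> C * L powr (- \<epsilon>))"
proof -
  interpret prob_space M by fact
  (* only the first moment of the weights is needed; the measurability of B and 0 \<le> \<alpha> are not *)
  have "v \<gamma> \<in> borel_measurable M" for \<gamma>
    using assms(3) unfolding indep_vars_def by auto
  moreover have "integrable M (v 0)"
    using assms(5)[of 1] by simp
  ultimately have "AE \<omega> in M. summable (\<lambda>\<gamma>. \<bar>v \<gamma> \<omega>\<bar> * tail_weight (real CARD('d) + 1) (y \<gamma> \<omega>))"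
    using assms(2,4,6) by (intro AE_summable_tail_weight)
  with AE_finite_points_in_cubes[OF assms(2)] show ?thesis
  proof eventually_elim
    case (elim \<omega>)
    then show ?case
      using assms(8,11) by (intro potential_diff_on_scaled_cube_le[OF assms(9)]) auto
  qed
qed

end
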